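(* For coprime integers $n,m>1$, $$m_2\!\left(\mathbb{Z}_{nm}^2\right)\le\min\left\{n\cdot m_2\!\left(\mathbb{Z}_m^2\right),\ m\cdot m_2\!\left(\mathbb{Z}_n^2\right)\right\}.$$
   Context: $\mathbb{Z}_k=\mathbb{Z}/k\mathbb{Z}$. A line in $\mathbb{Z}_k^2$ is a translate of a cyclic subgroup of order $k$ of the additive group $\mathbb{Z}_k^2$; points are collinear if they lie on a common line. A cap in $\mathbb{Z}_k^2$ is a subset no three distinct points of which are collinear. $m_2(\mathbb{Z}_k^2)$ denotes the maximum cardinality of a cap in $\mathbb{Z}_k^2$. *)

theory Defs
  imports Main
begin

text \<open>Z_k^2 is represented by the residues {0..<k} \<times> {0..<k} (k > 0), with
  componentwise addition modulo k.\<close>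

definition Zk2 :: "nat \<Rightarrow> (nat \<times> nat) set" where
  "Zk2 k = {0..<k} \<times> {0..<k}"

definition zadd :: "nat \<Rightarrow> nat \<times> nat \<Rightarrow> nat \<times> nat \<Rightarrow> nat \<times> nat" where
  "zadd k p q = ((fst p + fst q) mod k, (snd p + snd q) mod k)"

definition cyc_subgroup :: "nat \<Rightarrow> nat \<times> nat \<Rightarrow> (nat \<times> nat) set" where
  "cyc_subgroup k g = {((t * fst g) mod k, (t * snd g) mod k) | t. True}"

definition is_line :: "nat \<Rightarrow> (nat \<times> nat) set \<Rightarrow> bool" where
  "is_line k L \<longleftrightarrow> (\<exists>p\<in>Zk2 k. \<exists>g\<in>Zk2 k.
      card (cyc_subgroup k g) = k \<and> L = zadd k p ` cyc_subgroup k g)"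

definition is_cap :: "nat \<Rightarrow> (nat \<times> nat) set \<Rightarrow> bool" where
  "is_cap k A \<longleftrightarrow> A \<subseteq> Zk2 k \<and>
     (\<forall>x\<in>A. \<forall>y\<in>A. \<forall>z\<in>A. x \<noteq> y \<and> y \<noteq> z \<and> x \<noteq> z \<longrightarrow>
        \<not> (\<exists>L. is_line k L \<and> x \<in> L \<and> y \<in> L \<and> z \<in> L))"

definition m2 :: "nat \<Rightarrow> nat" where
  "m2 k = Max (card ` {A. is_cap k A})"

end

theory Submission
  imports Defs "HOL-Number_Theory.Cong"
begin

text \<open>Split a cap of \<open>\<int>\<^sub>n\<^sub>m\<^sup>2\<close> into the \<open>n\<close> classes of points with the same second
  coordinate modulo \<open>n\<close>. Inside one class, reduction modulo \<open>m\<close> reflects collinearity: by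
  the Chinese remainder theorem a line \<open>q + r h\<close> of \<open>\<int>\<^sub>m\<^sup>2\<close> lifts to a line of
  \<open>\<int>\<^sub>n\<^sub>m\<^sup>2\<close> with direction \<open>(1,0)\<close> modulo \<open>n\<close> and \<open>h\<close> modulo \<open>m\<close>, and that line contains
  every point of the class reducing onto \<open>q + r h\<close> (take the first coordinate modulo \<open>n\<close>
  and \<open>r\<close> modulo \<open>m\<close> as the line parameter). So a class either reduces injectively onto
  a cap of \<open>\<int>\<^sub>m\<^sup>2\<close>, or two of its points have the same reduction, and then any third
  point would be collinear with them, so the class has at most two points. Either way
  a class has at most \<open>m\<^sub>2(\<int>\<^sub>m\<^sup>2)\<close> points.\<close>

definition primitive :: "nat \<Rightarrow> nat \<times> nat \<Rightarrow> bool" where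
  "primitive k g \<longleftrightarrow> (\<forall>t. k dvd t * fst g \<and> k dvd t * snd g \<longrightarrow> k dvd t)"

definition on_line :: "nat \<Rightarrow> nat \<times> nat \<Rightarrow> nat \<times> nat \<Rightarrow> nat \<times> nat \<Rightarrow> bool" where
  "on_line k q h p \<longleftrightarrow> (\<exists>r. p = ((fst q + r * fst h) mod k, (snd q + r * snd h) mod k))"

definition collinear :: "nat \<Rightarrow> nat \<times> nat \<Rightarrow> nat \<times> nat \<Rightarrow> nat \<times> nat \<Rightarrow> bool" where
  "collinear k x y z \<longleftrightarrow> (\<exists>L. is_line k L \<and> x \<in> L \<and> y \<in> L \<and> z \<in> L)"

definition reduce :: "nat \<Rightarrow> nat \<times> nat \<Rightarrow> nat \<times> nat" where
  "reduce m p = (fst p mod m, snd p mod m)"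

lemma is_cap_iff:
  "is_cap k A \<longleftrightarrow> A \<subseteq> Zk2 k \<and>
     (\<forall>x\<in>A. \<forall>y\<in>A. \<forall>z\<in>A. x \<noteq> y \<and> y \<noteq> z \<and> x \<noteq> z \<longrightarrow> \<not> collinear k x y z)"
  by (simp add: is_cap_def collinear_def)

lemma finite_caps: "finite {A. is_cap k A}"
proof -
  have "{A. is_cap k A} \<subseteq> Pow (Zk2 k)" by (auto simp: is_cap_def)
  moreover have "finite (Zk2 k)" by (simp add: Zk2_def)
  ultimately show ?thesis by (meson finite_Pow_iff finite_subset)
qed

lemma card_le_m2: "is_cap k A \<Longrightarrow> card A \<le> m2 k"
  unfolding m2_def using finite_caps by (intro Max_ge) auto

lemma m2_le:
  assumes "\<And>A. is_cap k A \<Longrightarrow> card A \<le> b"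
  shows "m2 k \<le> b"
proof -
  have "is_cap k {}" by (simp add: is_cap_def)
  then show ?thesis unfolding m2_def using finite_caps assms by (subst Max_le_iff) auto
qed

lemma two_le_m2:
  assumes "m > 1"
  shows "2 \<le> m2 m"
proof -
  have "is_cap m {(0, 0), (1, 0)}" using assms by (auto simp: is_cap_def Zk2_def)
  from card_le_m2[OF this] show ?thesis by simp
qed

subsection \<open>Lines of \<open>\<int>\<^sub>k\<^sup>2\<close>\<close>

lemma cyc_subgroup_eq_image:
  assumes "k > 0"
  shows "cyc_subgroup k g = (\<lambda>t. ((t * fst g) mod k, (t * snd g) mod k)) ` {0..<k}"
proof
  show "cyc_subgroup k g \<subseteq> (\<lambda>t. ((t * fst g) mod k, (t * snd g) mod k)) ` {0..<k}"
  proof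
    fix x assume "x \<in> cyc_subgroup k g"
    then obtain t where "x = ((t * fst g) mod k, (t * snd g) mod k)"
      unfolding cyc_subgroup_def by blast
    then have "x = (((t mod k) * fst g) mod k, ((t mod k) * snd g) mod k)"
      by (simp add: mod_mult_left_eq)
    moreover have "t mod k \<in> {0..<k}" using assms by simp
    ultimately show "x \<in> (\<lambda>t. ((t * fst g) mod k, (t * snd g) mod k)) ` {0..<k}" by blast
  qed
qed (auto simp: cyc_subgroup_def)

lemma card_cyc_subgroup_eq_iff_primitive:
  assumes "k > 0"
  shows "card (cyc_subgroup k g) = k \<longleftrightarrow> primitive k g"
proof -
  let ?f = "\<lambda>t. ((t * fst g) mod k, (t * snd g) mod k)"
  have "card (cyc_subgroup k g) = k \<longleftrightarrow> inj_on ?f {0..<k}"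
    using inj_on_iff_eq_card[of "{0..<k}" ?f] cyc_subgroup_eq_image[OF assms] by simp
  also have "\<dots> \<longleftrightarrow> primitive k g"
  proof
    assume inj: "inj_on ?f {0..<k}"
    show "primitive k g" unfolding primitive_def
    proof (intro allI impI)
      fix t assume "k dvd t * fst g \<and> k dvd t * snd g"
      then have "?f (t mod k) = ?f 0" by (simp add: mod_mult_left_eq)
      moreover have "t mod k \<in> {0..<k}" "0 \<in> {0..<k}" using assms by auto
      ultimately have "t mod k = 0" using inj by (meson inj_onD)
      then show "k dvd t" by auto
    qed
  next
    assume prim: "primitive k g"
    have "s = t" if "s < k" "t < k" "?f s = ?f t" "s \<le> t" for s t
    proof -
      have "s * fst g \<le> t * fst g" "s * snd g \<le> t * snd g"
        using \<open>s \<le> t\<close> by (simp_all add: mult_le_mono1)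
      moreover have "(t * fst g) mod k = (s * fst g) mod k" "(t * snd g) mod k = (s * snd g) mod k"
        using \<open>?f s = ?f t\<close> by auto
      ultimately have "k dvd t * fst g - s * fst g" "k dvd t * snd g - s * snd g"
        by (simp_all add: mod_eq_dvd_iff_nat)
      then have "k dvd (t - s) * fst g" "k dvd (t - s) * snd g"
        by (simp_all add: diff_mult_distrib)
      with prim have "k dvd t - s" unfolding primitive_def by blast
      moreover have "t - s < k" using \<open>t < k\<close> by simp
      ultimately show "s = t" using \<open>s \<le> t\<close> by (metis dvd_imp_le le_antisym not_less zero_less_diff)
    qed
    then show "inj_on ?f {0..<k}"
      by (intro inj_onI) (metis atLeastLessThan_iff nat_le_linear)
  qed
  finally show ?thesis .
qed

lemma on_line_if_mem_translate:
  "y \<in> zadd k q ` cyc_subgroup k h \<Longrightarrow> on_line k q h y"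
  unfolding zadd_def cyc_subgroup_def on_line_def by (auto simp: mod_add_right_eq)

lemma collinear_imp_on_line:
  assumes "k > 0" "collinear k x y z"
  shows "\<exists>q h. primitive k h \<and> on_line k q h x \<and> on_line k q h y \<and> on_line k q h z"
  using assms on_line_if_mem_translate card_cyc_subgroup_eq_iff_primitive[OF \<open>k > 0\<close>]
  unfolding collinear_def is_line_def by metis

text \<open>The difference \<open>y' - y\<close> divided by the gcd of its coordinates has coprime coordinates,
  hence is primitive.\<close>

lemma primitive_direction_between:
  assumes "m > 0" "y \<in> Zk2 m" "y' \<in> Zk2 m"
  shows "\<exists>h. primitive m h \<and> on_line m y h y'"
proof -
  obtain y1 y2 z1 z2 where yy: "y = (y1, y2)" "y' = (z1, z2)" by (cases y, cases y')
  have bounds: "y1 < m" "y2 < m" "z1 < m" "z2 < m" using assms yy by (auto simp: Zk2_def)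
  define a where "a = (z1 + m - y1) mod m"
  define b where "b = (z2 + m - y2) mod m"
  have "y1 + (z1 + m - y1) = z1 + m" "y2 + (z2 + m - y2) = z2 + m" using bounds by simp_all
  then have ea: "(y1 + a) mod m = z1" and eb: "(y2 + b) mod m = z2"
    unfolding a_def b_def using bounds by (simp_all add: mod_add_right_eq)
  show ?thesis
  proof (cases "a = 0 \<and> b = 0")
    case True
    then show ?thesis using ea eb yy
      by (intro exI[of _ "(1,0)"]) (auto simp: primitive_def on_line_def intro: exI[of _ 0])
  next
    case False
    define g where "g = gcd a b"
    have g_dvd: "a = g * (a div g)" "b = g * (b div g)" unfolding g_def by auto
    have coprime: "gcd (a div g) (b div g) = 1"
      unfolding g_def by (metis div_gcd_coprime False coprime_iff_gcd_eq_1)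
    have "primitive m (a div g, b div g)" unfolding primitive_def
    proof (intro allI impI)
      fix t assume "m dvd t * fst (a div g, b div g) \<and> m dvd t * snd (a div g, b div g)"
      then have "m dvd gcd (t * (a div g)) (t * (b div g))" by simp
      also have "gcd (t * (a div g)) (t * (b div g)) = t" using coprime
        by (metis gcd_mult_distrib_nat mult.right_neutral)
      finally show "m dvd t" .
    qed
    moreover have "on_line m y (a div g, b div g) y'"
      unfolding on_line_def using ea eb yy g_dvd
      by (intro exI[of _ g]) (simp add: mult.commute)
    ultimately show ?thesis by blast
  qed
qed

subsection \<open>Lifting lines through the Chinese remainder theorem\<close>

lemma line_lifting:
  assumes n: "n > 0" and m: "m > 0" and cop: "coprime n m" and prim: "primitive m h"
  shows "\<exists>L. is_line (n * m) L \<and>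
    (\<forall>p\<in>Zk2 (n * m). snd p mod n = c \<and> on_line m q h (reduce m p) \<longrightarrow> p \<in> L)"
proof -
  let ?N = "n * m"
  have N: "?N > 0" using n m by simp
  obtain P1 where P1: "[P1 = 0] (mod n)" "[P1 = fst q] (mod m)"
    using binary_chinese_remainder_nat[OF cop] by blast
  obtain P2 where P2: "[P2 = c] (mod n)" "[P2 = snd q] (mod m)"
    using binary_chinese_remainder_nat[OF cop] by blast
  obtain G1 where G1: "[G1 = 1] (mod n)" "[G1 = fst h] (mod m)"
    using binary_chinese_remainder_nat[OF cop] by blast
  obtain G2 where G2: "[G2 = 0] (mod n)" "[G2 = snd h] (mod m)"
    using binary_chinese_remainder_nat[OF cop] by blast
  define P where "P = (P1 mod ?N, P2 mod ?N)"
  define G where "G = (G1 mod ?N, G2 mod ?N)"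
  define L where "L = zadd ?N P ` cyc_subgroup ?N G"
  have "primitive ?N G" unfolding primitive_def
  proof (intro allI impI)
    fix t assume "?N dvd t * fst G \<and> ?N dvd t * snd G"
    then have "[t * fst G = 0] (mod ?N)" "[t * snd G = 0] (mod ?N)" by (auto simp: cong_0_iff)
    then have tG: "[t * G1 = 0] (mod ?N)" "[t * G2 = 0] (mod ?N)"
      unfolding G_def by (auto simp: cong_def mod_mult_right_eq)
    have "[t * G1 = 0] (mod n)" using tG cong_modulus_mult_nat by blast
    moreover have "[t * G1 = t * 1] (mod n)" using G1(1) by (rule cong_scalar_left)
    ultimately have "[t = 0] (mod n)" by (metis cong_sym cong_trans mult_1_right)
    then have "n dvd t" by (simp add: cong_0_iff)
    have "[t * G1 = 0] (mod m)" "[t * G2 = 0] (mod m)"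
      using tG cong_modulus_mult_nat mult.commute by metis+
    moreover have "[t * G1 = t * fst h] (mod m)" "[t * G2 = t * snd h] (mod m)"
      using G1 G2 by (simp_all add: cong_scalar_left)
    ultimately have "m dvd t * fst h" "m dvd t * snd h"
      by (metis cong_sym cong_trans cong_0_iff)+
    with prim have "m dvd t" unfolding primitive_def by blast
    with \<open>n dvd t\<close> cop show "?N dvd t" by (simp add: divides_mult)
  qed
  then have "is_line ?N L" unfolding is_line_def L_def
    using card_cyc_subgroup_eq_iff_primitive[OF N] N
    by (intro bexI[of _ P] bexI[of _ G]) (auto simp: P_def G_def Zk2_def)
  moreover have "p \<in> L"
    if p: "p \<in> Zk2 ?N" "snd p mod n = c" and "on_line m q h (reduce m p)" for p
  proof -
    obtain a b where ab: "p = (a, b)" by (cases p)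
    have "a < ?N" "b < ?N" using p ab by (auto simp: Zk2_def)
    obtain r where r: "[fst q + r * fst h = a] (mod m)" "[snd q + r * snd h = b] (mod m)"
      using \<open>on_line m q h (reduce m p)\<close> ab by (auto simp: on_line_def reduce_def cong_def)
    obtain t where t: "[t = a] (mod n)" "[t = r] (mod m)"
      using binary_chinese_remainder_nat[OF cop] by blast
    have "[P1 + t * G1 = a] (mod ?N)"
    proof (rule coprime_cong_mult_nat[OF _ _ cop])
      have "[P1 + t * G1 = 0 + a * 1] (mod n)" using P1 t G1 by (intro cong_add cong_mult) auto
      then show "[P1 + t * G1 = a] (mod n)" by simp
      have "[P1 + t * G1 = fst q + r * fst h] (mod m)"
        using P1 t G1 by (intro cong_add cong_mult) auto
      then show "[P1 + t * G1 = a] (mod m)" using r(1) by (rule cong_trans)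
    qed
    moreover have "[P2 + t * G2 = b] (mod ?N)"
    proof (rule coprime_cong_mult_nat[OF _ _ cop])
      have "[P2 + t * G2 = c + a * 0] (mod n)" using P2 t G2 by (intro cong_add cong_mult) auto
      moreover have "[c = b] (mod n)" using p ab by (auto simp: cong_def)
      ultimately show "[P2 + t * G2 = b] (mod n)" by (simp add: cong_trans)
      have "[P2 + t * G2 = snd q + r * snd h] (mod m)"
        using P2 t G2 by (intro cong_add cong_mult) auto
      then show "[P2 + t * G2 = b] (mod m)" using r(2) by (rule cong_trans)
    qed
    ultimately have "zadd ?N P ((t * fst G) mod ?N, (t * snd G) mod ?N) = p"
      using \<open>a < ?N\<close> \<open>b < ?N\<close> ab unfolding zadd_def P_def G_def
      by (simp add: cong_def mod_add_left_eq mod_add_right_eq mod_mult_right_eq)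
    moreover have "((t * fst G) mod ?N, (t * snd G) mod ?N) \<in> cyc_subgroup ?N G"
      unfolding cyc_subgroup_def by blast
    ultimately show ?thesis unfolding L_def by (metis image_eqI)
  qed
  ultimately show ?thesis by blast
qed

lemma collinear_lift:
  assumes "n > 0" "m > 0" "coprime n m" "primitive m h"
    and "\<And>p. p \<in> {x, y, z} \<Longrightarrow> p \<in> Zk2 (n * m) \<and> snd p mod n = c \<and> on_line m q h (reduce m p)"
  shows "collinear (n * m) x y z"
  using line_lifting[OF assms(1-4), of c q] assms(5) unfolding collinear_def by blast

subsection \<open>Caps split by the second coordinate modulo \<open>n\<close>\<close>

lemma is_cap_reduce_class:
  assumes n: "n > 0" and m: "m > 0" and cop: "coprime n m" and cap: "is_cap (n * m) A"
    and inj: "inj_on (reduce m) {p\<in>A. snd p mod n = c}"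
  shows "is_cap m (reduce m ` {p\<in>A. snd p mod n = c})"
  unfolding is_cap_iff
proof (intro conjI ballI impI)
  show "reduce m ` {p\<in>A. snd p mod n = c} \<subseteq> Zk2 m" using m by (auto simp: reduce_def Zk2_def)
next
  let ?P = "{p\<in>A. snd p mod n = c}"
  fix x' y' z' assume "x' \<in> reduce m ` ?P" "y' \<in> reduce m ` ?P" "z' \<in> reduce m ` ?P"
    and distinct: "x' \<noteq> y' \<and> y' \<noteq> z' \<and> x' \<noteq> z'"
  then obtain x y z where xyz: "x \<in> ?P" "y \<in> ?P" "z \<in> ?P"
    and reduce: "x' = reduce m x" "y' = reduce m y" "z' = reduce m z"
    by blast
  show "\<not> collinear m x' y' z'"
  proof
    assume "collinear m x' y' z'"
    then obtain q h where "primitive m h" "on_line m q h x'" "on_line m q h y'" "on_line m q h z'"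
      using collinear_imp_on_line[OF m] by blast
    moreover have "A \<subseteq> Zk2 (n * m)" using cap by (simp add: is_cap_def)
    ultimately have "collinear (n * m) x y z"
      using xyz reduce by (intro collinear_lift[OF n m cop]) auto
    moreover have "x \<noteq> y" "y \<noteq> z" "x \<noteq> z" using distinct reduce by auto
    ultimately show False using cap xyz unfolding is_cap_iff by blast
  qed
qed

lemma card_class_le_two:
  assumes n: "n > 0" and m: "m > 0" and cop: "coprime n m" and cap: "is_cap (n * m) A"
    and not_inj: "\<not> inj_on (reduce m) {p\<in>A. snd p mod n = c}"
  shows "card {p\<in>A. snd p mod n = c} \<le> 2"
proof -
  let ?P = "{p\<in>A. snd p mod n = c}"
  obtain x y where xy: "x \<in> ?P" "y \<in> ?P" "x \<noteq> y" "reduce m x = reduce m y"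
    using not_inj unfolding inj_on_def by blast
  have AZ: "A \<subseteq> Zk2 (n * m)" using cap by (simp add: is_cap_def)
  have "z \<in> {x, y}" if z: "z \<in> ?P" for z
  proof (rule ccontr)
    assume z_new: "z \<notin> {x, y}"
    have "reduce m x \<in> Zk2 m" "reduce m z \<in> Zk2 m" using m by (simp_all add: reduce_def Zk2_def)
    then obtain h where h: "primitive m h" "on_line m (reduce m x) h (reduce m z)"
      using primitive_direction_between[OF m] by blast
    have "on_line m (reduce m x) h (reduce m x)"
      unfolding on_line_def reduce_def by (intro exI[of _ 0]) simp
    then have "collinear (n * m) x y z"
      using h xy z AZ by (intro collinear_lift[OF n m cop h(1)]) auto
    moreover have "x \<noteq> z" "y \<noteq> z" using z_new by auto
    ultimately show False using cap xy z xy(3) unfolding is_cap_iff by blast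
  qed
  then have "?P \<subseteq> {x, y}" by blast
  then have "card ?P \<le> card {x, y}" by (intro card_mono) simp_all
  then show ?thesis using xy(3) by simp
qed

lemma card_class_le_m2:
  assumes n: "n > 0" and m: "m > 1" and cop: "coprime n m" and cap: "is_cap (n * m) A"
  shows "card {p\<in>A. snd p mod n = c} \<le> m2 m"
proof -
  have m0: "m > 0" using m by simp
  show ?thesis
  proof (cases "inj_on (reduce m) {p\<in>A. snd p mod n = c}")
    case True
    have "card (reduce m ` {p\<in>A. snd p mod n = c}) \<le> m2 m"
      by (rule card_le_m2[OF is_cap_reduce_class[OF n m0 cop cap True]])
    with True show ?thesis by (simp add: card_image)
  next
    case False
    with two_le_m2[OF m] card_class_le_two[OF n m0 cop cap False] show ?thesis by simp
  qed
qed

lemma m2_mult_coprime_le: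
  assumes n: "n > 0" and m: "m > 1" and cop: "coprime n m"
  shows "m2 (n * m) \<le> n * m2 m"
proof (rule m2_le)
  fix A assume cap: "is_cap (n * m) A"
  have "A = (\<Union>c\<in>{0..<n}. {p\<in>A. snd p mod n = c})" using n by auto
  then have "card A = card (\<Union>c\<in>{0..<n}. {p\<in>A. snd p mod n = c})" by simp
  also have "\<dots> \<le> (\<Sum>c\<in>{0..<n}. card {p\<in>A. snd p mod n = c})"
    by (rule card_UN_le) simp
  also have "\<dots> \<le> (\<Sum>c\<in>{0..<n}. m2 m)"
    by (intro sum_mono card_class_le_m2[OF n m cop cap])
  finally show "card A \<le> n * m2 m" by simp
qed

theorem mainTheorem8:
  fixes n m :: nat
  assumes "n > 1" and "m > 1" and "coprime n m"
  shows "m2 (n * m) \<le> min (n * m2 m) (m * m2 n)"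
proof -
  have "m2 (n * m) \<le> n * m2 m" using m2_mult_coprime_le assms by simp
  moreover have "m2 (m * n) \<le> m * m2 n"
    using m2_mult_coprime_le[of m n] assms by (simp add: coprime_commute)
  ultimately show ?thesis by (simp add: mult.commute)
qed

end
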